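(* Let $d\ge1$ be an integer and $p=(d+1)(d+2)/2$. Let $f(x,y)=\sum_{a,b\ge0,\,a+b\le d} c_{a,b}\,x^{2a}y^{2b}$ (i.e. $f=c_0+c_1x^2+c_2y^2+\cdots+c_{p-1}y^{2d}$, a real linear combination of the $p$ monomials $x^{2a}y^{2b}$ with $a+b\le d$) with all coefficients satisfying $|c|\le 1$. Let $\delta>0$ and for $i=1,\dots,N$ let $S_i=\{(x,y)\mid x=x_i>0,\ 0<y_i-\delta\le y\le y_i+\delta\}$, and suppose the curve $f=0$ passes through (meets) every $S_i$. Then $$\sum_{i=1}^N f(x_i,y_i)^2\le 2(d+1)(d+2)\,\delta^2\sum_{i=1}^N h_d(x_i,y_i+\delta),\qquad h_d(x,y)=y^2\sum_{l,j\ge0,\ l+j\le d-1}(l+1)^2x^{4j}y^{4l}.$$ In particular $h_2(x,y)=y^2(1+x^4+4y^4)$, $h_3(x,y)=y^2(1+x^4+4y^4+x^8+4x^4y^4+9y^8)$, and $h_4(x,y)=y^2(1+x^4+4y^4+x^8+4x^4y^4+9y^8+x^{12}+4x^8y^4+9x^4y^8+16y^{12})$. *)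

theory Defs
  imports Complex_Main
begin

definition even_poly :: "nat \<Rightarrow> (nat \<Rightarrow> nat \<Rightarrow> real) \<Rightarrow> real \<Rightarrow> real \<Rightarrow> real" where
  "even_poly d c x y = (\<Sum>(a,b)\<in>{(a,b). a + b \<le> d}. c a b * x ^ (2*a) * y ^ (2*b))"

definition h_d :: "nat \<Rightarrow> real \<Rightarrow> real \<Rightarrow> real" where
  "h_d d x y = y^2 * (\<Sum>(l,j)\<in>{(l,j). l + j \<le> d - 1}. (real l + 1)^2 * x ^ (4*j) * y ^ (4*l))"

end

theory Submission
  imports Defs "HOL-Analysis.Convex"
begin

(* If f(x, z) = 0 with |y - z| \<le> \<delta> and Y = y + \<delta> bounds |y| and |z|, then the mean value bound
   |y^n - z^n| \<le> n Y^(n-1) |y - z| and |c a b| \<le> 1 give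
   |f(x, y)| = |f(x, y) - f(x, z)| \<le> \<delta> * (sum over a + b \<le> d of 2b x^(2a) Y^(2b-1)).
   Cauchy-Schwarz over the (d+1)(d+2)/2 index pairs turns the square of this sum into
   (d+1)(d+2)/2 times the sum of squares, which is exactly 4 h_d(x, Y). Summing over the
   points gives the theorem. *)

lemma abs_power_diff_le:
  fixes u v M :: real
  assumes "\<bar>u\<bar> \<le> M" "\<bar>v\<bar> \<le> M"
  shows "\<bar>u ^ n - v ^ n\<bar> \<le> real n * M ^ (n - 1) * \<bar>u - v\<bar>"
proof (cases "M = 0 \<or> n = 0")
  case True
  then show ?thesis using assms by auto
next
  case False
  then have "M > 0" and n: "M ^ n = M ^ (n - 1) * M"
    using assms by (auto simp flip: power_Suc2)
  have "\<bar>(u / M) ^ n - (v / M) ^ n\<bar> \<le> real n * \<bar>u / M - v / M\<bar>"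
    using norm_power_diff[of "u / M" "v / M" n] assms \<open>M > 0\<close> by simp
  then have "M ^ n * \<bar>(u / M) ^ n - (v / M) ^ n\<bar> \<le> M ^ n * (real n * \<bar>u / M - v / M\<bar>)"
    using \<open>M > 0\<close> by (intro mult_left_mono) auto
  then show ?thesis
    using \<open>M > 0\<close> by (simp add: n abs_mult field_simps flip: diff_divide_distrib)
qed

lemma finite_triangle: "finite {(a, b). a + b \<le> (d::nat)}"
  by (rule finite_subset[of _ "{..d} \<times> {..d}"]) auto

lemma card_triangle: "2 * card {(a, b). a + b \<le> (d::nat)} = (d + 1) * (d + 2)"
proof (induction d)
  case 0
  have "{(a, b). a + b \<le> (0::nat)} = {(0, 0)}" by auto
  then show ?case by simp
next
  case (Suc d)
  let ?diag = "(\<lambda>a. (a, Suc d - a)) ` {..Suc d}"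
  have split: "{(a, b). a + b \<le> Suc d} = {(a, b). a + b \<le> d} \<union> ?diag"
    by auto
  have "card ?diag = d + 2"
    by (subst card_image) (auto simp: inj_on_def)
  moreover have "{(a, b). a + b \<le> d} \<inter> ?diag = {}" by auto
  ultimately have "card {(a, b). a + b \<le> Suc d} = card {(a, b). a + b \<le> d} + (d + 2)"
    unfolding split using finite_triangle by (subst card_Un_disjoint) auto
  then show ?case using Suc by simp
qed

lemma sum_sq_monomial_derivs_eq_h_d:
  assumes "d \<ge> 1"
  shows "(\<Sum>(a, b)\<in>{(a, b). a + b \<le> d}. (2 * real b * x ^ (2*a) * y ^ (2*b - 1))^2)
           = 4 * h_d d x y" (is "?lhs = _")
proof -
  define g where "g = (\<lambda>(a, b). (2 * real b * x ^ (2*a) * y ^ (2*b - 1))^2)"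
  have "?lhs = (\<Sum>p\<in>{(a, b). a + b \<le> d}. g p)"
    by (simp add: g_def)
  also have "\<dots> = (\<Sum>p\<in>{(a, b). a + b \<le> d \<and> b \<ge> 1}. g p)"
    using finite_triangle by (intro sum.mono_neutral_right) (auto simp: g_def)
  also have "\<dots> = (\<Sum>(l, j)\<in>{(l, j). l + j \<le> d - 1}. g (j, l + 1))"
    by (rule sum.reindex_bij_witness[where i = "\<lambda>(l, j). (j, l + 1)" and j = "\<lambda>(a, b). (b - 1, a)"])
       (use assms in auto)
  also have "\<dots> = (\<Sum>(l, j)\<in>{(l, j). l + j \<le> d - 1}. 4 * (y^2 * ((real l + 1)^2 * x ^ (4*j) * y ^ (4*l))))"
  proof (rule sum.cong[OF refl], clarify)
    fix l j :: nat
    have "g (j, l + 1) = 4 * (real l + 1)^2 * (x ^ (2*j))^2 * (y ^ (2*l + 1))^2"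
      by (simp add: g_def power_mult_distrib)
    also have "\<dots> = 4 * (y^2 * ((real l + 1)^2 * x ^ (4*j) * y ^ (4*l)))"
    proof -
      have "(x ^ (2*j))^2 = x ^ (4*j)" "(y ^ (2*l + 1))^2 = y^2 * y ^ (4*l)"
        by (simp_all flip: power_mult power_add add: algebra_simps)
      then show ?thesis by (simp only:) (simp add: mult_ac)
    qed
    finally show "g (j, l + 1) = 4 * (y^2 * ((real l + 1)^2 * x ^ (4*j) * y ^ (4*l)))" .
  qed
  also have "\<dots> = 4 * h_d d x y"
    unfolding h_d_def by (simp add: sum_distrib_left split_def)
  finally show ?thesis .
qed

lemma abs_even_poly_diff_le:
  assumes "\<And>a b. a + b \<le> d \<Longrightarrow> \<bar>c a b\<bar> \<le> 1" "\<bar>y\<bar> \<le> Y" "\<bar>z\<bar> \<le> Y"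
  shows "\<bar>even_poly d c x y - even_poly d c x z\<bar>
           \<le> \<bar>y - z\<bar> * (\<Sum>(a, b)\<in>{(a, b). a + b \<le> d}. 2 * real b * x ^ (2*a) * Y ^ (2*b - 1))"
proof -
  have "\<bar>even_poly d c x y - even_poly d c x z\<bar>
          = \<bar>\<Sum>(a, b)\<in>{(a, b). a + b \<le> d}. c a b * x ^ (2*a) * (y ^ (2*b) - z ^ (2*b))\<bar>"
    unfolding even_poly_def by (simp add: split_def algebra_simps flip: sum_subtractf)
  also have "\<dots> \<le> (\<Sum>(a, b)\<in>{(a, b). a + b \<le> d}. \<bar>c a b * x ^ (2*a) * (y ^ (2*b) - z ^ (2*b))\<bar>)"
    by (simp add: split_def)
  also have "\<dots> \<le> (\<Sum>(a, b)\<in>{(a, b). a + b \<le> d}. \<bar>y - z\<bar> * (2 * real b * x ^ (2*a) * Y ^ (2*b - 1)))"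
  proof (rule sum_mono, clarify)
    fix a b assume "a + b \<le> d"
    have "\<bar>c a b * x ^ (2*a) * (y ^ (2*b) - z ^ (2*b))\<bar> = \<bar>c a b\<bar> * x ^ (2*a) * \<bar>y ^ (2*b) - z ^ (2*b)\<bar>"
      by (simp add: abs_mult power_mult)
    also have "\<dots> \<le> 1 * x ^ (2*a) * (real (2*b) * Y ^ (2*b - 1) * \<bar>y - z\<bar>)"
      using assms \<open>a + b \<le> d\<close> abs_power_diff_le[of y Y z "2*b"]
      by (intro mult_mono) (auto simp: power_mult)
    finally show "\<bar>c a b * x ^ (2*a) * (y ^ (2*b) - z ^ (2*b))\<bar>
                    \<le> \<bar>y - z\<bar> * (2 * real b * x ^ (2*a) * Y ^ (2*b - 1))"
      by (simp add: algebra_simps)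
  qed
  finally show ?thesis by (simp add: sum_distrib_left split_def)
qed

lemma even_poly_sq_le_h_d:
  assumes "d \<ge> 1" "\<And>a b. a + b \<le> d \<Longrightarrow> \<bar>c a b\<bar> \<le> 1"
    and "even_poly d c x z = 0" "\<bar>y\<bar> \<le> Y" "\<bar>z\<bar> \<le> Y" "\<bar>y - z\<bar> \<le> \<delta>"
  shows "(even_poly d c x y)^2 \<le> 2 * (real d + 1) * (real d + 2) * \<delta>^2 * h_d d x Y"
proof -
  define S where "S = {(a, b). a + b \<le> (d::nat)}"
  define g where "g = (\<lambda>(a, b). 2 * real b * x ^ (2*a) * Y ^ (2*b - 1))"
  have "0 \<le> (\<Sum>p\<in>S. g p)"
    using \<open>\<bar>y\<bar> \<le> Y\<close> by (intro sum_nonneg) (auto simp: g_def power_mult)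
  have "\<bar>even_poly d c x y - even_poly d c x z\<bar> \<le> \<bar>y - z\<bar> * (\<Sum>p\<in>S. g p)"
    unfolding S_def g_def using assms(2,4,5) by (rule abs_even_poly_diff_le)
  also have "\<dots> \<le> \<delta> * (\<Sum>p\<in>S. g p)"
    using assms(6) \<open>0 \<le> (\<Sum>p\<in>S. g p)\<close> by (rule mult_right_mono)
  finally have "\<bar>even_poly d c x y\<bar> \<le> \<delta> * (\<Sum>p\<in>S. g p)"
    using assms(3) by simp
  then have "\<bar>even_poly d c x y\<bar>^2 \<le> (\<delta> * (\<Sum>p\<in>S. g p))^2"
    by (rule power_mono) simp
  then have "(even_poly d c x y)^2 \<le> \<delta>^2 * (\<Sum>p\<in>S. g p)^2"
    by (simp add: power_mult_distrib)
  also have "\<dots> \<le> \<delta>^2 * ((\<Sum>p\<in>S. (g p)^2) * card S)"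
    by (intro mult_left_mono sum_squared_le_sum_of_squares) auto
  also have "\<dots> = \<delta>^2 * (4 * h_d d x Y * ((real d + 1) * (real d + 2) / 2))"
  proof -
    have "real (2 * card S) = real ((d + 1) * (d + 2))"
      using card_triangle[of d] unfolding S_def by (simp only:)
    then have "real (card S) = (real d + 1) * (real d + 2) / 2"
      by (simp add: algebra_simps)
    then show ?thesis
      using sum_sq_monomial_derivs_eq_h_d[OF \<open>d \<ge> 1\<close>, where x = x and y = Y]
      unfolding S_def g_def by (simp add: split_def)
  qed
  finally show ?thesis by (simp add: algebra_simps)
qed

theorem corollary5:
  fixes d N :: nat and c :: "nat \<Rightarrow> nat \<Rightarrow> real" and \<delta> :: real
    and xs ys :: "nat \<Rightarrow> real"
  assumes "d \<ge> 1"
    and "\<And>a b. a + b \<le> d \<Longrightarrow> \<bar>c a b\<bar> \<le> 1"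
    and "\<delta> > 0"
    and "\<And>i. i \<in> {1..N} \<Longrightarrow> xs i > 0"
    and "\<And>i. i \<in> {1..N} \<Longrightarrow> ys i - \<delta> > 0"
    and "\<And>i. i \<in> {1..N} \<Longrightarrow>
           \<exists>y. ys i - \<delta> \<le> y \<and> y \<le> ys i + \<delta> \<and> even_poly d c (xs i) y = 0"
  shows "(\<Sum>i=1..N. (even_poly d c (xs i) (ys i))^2)
           \<le> 2 * (real d + 1) * (real d + 2) * \<delta>^2 * (\<Sum>i=1..N. h_d d (xs i) (ys i + \<delta>))"
proof -
  have "(even_poly d c (xs i) (ys i))^2
          \<le> 2 * (real d + 1) * (real d + 2) * \<delta>^2 * h_d d (xs i) (ys i + \<delta>)"
    if i: "i \<in> {1..N}" for i
  proof -
    obtain z where z: "ys i - \<delta> \<le> z" "z \<le> ys i + \<delta>" "even_poly d c (xs i) z = 0"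
      using assms(6)[OF i] by blast
    have "\<bar>ys i\<bar> \<le> ys i + \<delta>" "\<bar>z\<bar> \<le> ys i + \<delta>" "\<bar>ys i - z\<bar> \<le> \<delta>"
      using z assms(3) assms(5)[OF i] by auto
    then show ?thesis
      using assms(1,2) z(3) by (rule even_poly_sq_le_h_d[rotated 3])
  qed
  then have "(\<Sum>i=1..N. (even_poly d c (xs i) (ys i))^2)
               \<le> (\<Sum>i=1..N. 2 * (real d + 1) * (real d + 2) * \<delta>^2 * h_d d (xs i) (ys i + \<delta>))"
    by (rule sum_mono)
  then show ?thesis
    by (simp add: sum_distrib_left)
qed

end
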